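(* Let $\pi$ be the cyclic permutation of $\{1,\dots,6\}$ given by $1\mapsto2\mapsto4\mapsto5\mapsto3\mapsto6\mapsto1$. Then $\pi$ is a unimodal pattern with over-rotation pair $(2,6)$, its code is non-decreasing, $r_\pi=\rho(\pi)=\frac13$, and $\pi$ has no block structure over an over-twist pattern of over-rotation number $\frac13$; that is, $\pi$ is very badly ordered.
   Context: A cyclic pattern is a cyclic permutation of $\{1,\dots,n\}$ viewed as a cycle $P$ on the line; the $P$-linear map $f$ agrees with the cycle on $P$ and is affine in between; the pattern is unimodal if $f$ has exactly one turning point, a local maximum. Over-rotation pair: $2p$ is the number of $x\in P$ with $f(x)-x$ and $f^2(x)-f(x)$ of different signs, $q$ the period, $\rho(\pi)=p/q$. $r_\pi$ is the left endpoint of the over-rotation interval $[r_\pi,\frac12]$ of $f$ (closure of the set of over-rotation numbers of non-fixed periodic orbits of $f$). For the unique fixed point $a$ of $f$, write $x>_a y$ if $x<y<a$ or $x>y>a$; code: $L(x_0)=0$ at the leftmost point and $L(f(y))=L(y)+\rho(\pi)-\varphi(y)$ with $\varphi(y)=1$ if $y>a$ and $f(y)<a$, else $0$; non-decreasing means $x>_a y\Rightarrow L(x)\le L(y)$. A pattern $A$ forces $B$ if every continuous interval map with a cycle of pattern $A$ has one of pattern $B$; an over-twist is a forcing-minimal pattern among patterns of a given over-rotation number. A permutation $\pi$ of $\{1,\dots,n\}$ has block structure over a pattern $\pi'$ if there are pairwise disjoint segments $I_0,\dots,I_k$ ($k\ge1$) with $\pi(T_n\cap I_j)=T_n\cap I_{j+1}$,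 $\pi(T_n\cap I_k)=T_n\cap I_0$, $T_n=\{1,\dots,n\}$, and $\pi'$ is the pattern obtained by collapsing each block $T_n\cap I_j$ to a point. A pattern is very badly ordered if its over-rotation number equals the left endpoint of its forced over-rotation interval while it has no block structure over an over-twist pattern of the same over-rotation number. *)

theory Defs
  imports "HOL-Analysis.Analysis"
begin

definition cyclic_pattern :: "nat \<Rightarrow> (nat \<Rightarrow> nat) \<Rightarrow> bool" where
  "cyclic_pattern n pp \<longleftrightarrow> 1 \<le> n \<and> bij_betw pp {1..n} {1..n} \<and>
     (\<forall>i. i \<notin> {1..n} \<longrightarrow> pp i = i) \<and> {(pp ^^ k) 1 | k. True} = {1..n}"

definition plin :: "nat \<Rightarrow> (nat \<Rightarrow> nat) \<Rightarrow> real \<Rightarrow> real" where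
  "plin n pp x =
     (if x \<le> 1 then real (pp 1)
      else if x \<ge> real n then real (pp n)
      else (let i = nat \<lfloor>x\<rfloor> in
              real (pp i) + (x - real i) * (real (pp (Suc i)) - real (pp i))))"

definition turning_point :: "nat \<Rightarrow> (real \<Rightarrow> real) \<Rightarrow> real \<Rightarrow> bool" where
  "turning_point n f x \<longleftrightarrow> 1 < x \<and> x < real n \<and>
     \<not> (\<exists>e>0. (\<forall>y\<in>{x-e<..<x+e}. \<forall>z\<in>{x-e<..<x+e}. y < z \<longrightarrow> f y < f z) \<or>
               (\<forall>y\<in>{x-e<..<x+e}. \<forall>z\<in>{x-e<..<x+e}. y < z \<longrightarrow> f y > f z))"

definition local_max :: "(real \<Rightarrow> real) \<Rightarrow> real \<Rightarrow> bool" where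
  "local_max f x \<longleftrightarrow> (\<exists>e>0. \<forall>y\<in>{x-e<..<x+e}. f y \<le> f x)"

definition unimodal :: "nat \<Rightarrow> (nat \<Rightarrow> nat) \<Rightarrow> bool" where
  "unimodal n pp \<longleftrightarrow> cyclic_pattern n pp \<and>
     (\<exists>!x. turning_point n (plin n pp) x) \<and>
     (\<forall>x. turning_point n (plin n pp) x \<longrightarrow> local_max (plin n pp) x)"

definition sign_changes :: "nat \<Rightarrow> (nat \<Rightarrow> nat) \<Rightarrow> nat" where
  "sign_changes n pp = card {i \<in> {1..n}.
      (real (pp i) - real i) * (real (pp (pp i)) - real (pp i)) < 0}"

definition over_rotation_pair :: "nat \<Rightarrow> (nat \<Rightarrow> nat) \<Rightarrow> nat \<Rightarrow> nat \<Rightarrow> bool" where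
  "over_rotation_pair n pp p q \<longleftrightarrow> 2 * p = sign_changes n pp \<and> q = n"

definition orho :: "nat \<Rightarrow> (nat \<Rightarrow> nat) \<Rightarrow> real" where
  "orho n pp = real (sign_changes n pp) / (2 * real n)"

definition periodic_orbit :: "(real \<Rightarrow> real) \<Rightarrow> real set \<Rightarrow> bool" where
  "periodic_orbit f P \<longleftrightarrow> (\<exists>x q. 0 < q \<and> (f ^^ q) x = x \<and> P = {(f ^^ k) x | k. k < q})"

definition orho_orbit :: "(real \<Rightarrow> real) \<Rightarrow> real set \<Rightarrow> real" where
  "orho_orbit f P = real (card {x \<in> P. (f x - x) * (f (f x) - f x) < 0}) / (2 * real (card P))"

definition over_rotation_interval :: "nat \<Rightarrow> (nat \<Rightarrow> nat) \<Rightarrow> real set" where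
  "over_rotation_interval n pp = closure
     {orho_orbit (plin n pp) P | P. periodic_orbit (plin n pp) P \<and> P \<subseteq> {1..real n}
                                    \<and> 2 \<le> card P}"

definition r_pat :: "nat \<Rightarrow> (nat \<Rightarrow> nat) \<Rightarrow> real" where
  "r_pat n pp = Inf (over_rotation_interval n pp)"

definition fixpt :: "nat \<Rightarrow> (nat \<Rightarrow> nat) \<Rightarrow> real" where
  "fixpt n pp = (THE a. 1 \<le> a \<and> a \<le> real n \<and> plin n pp a = a)"

definition phi :: "nat \<Rightarrow> (nat \<Rightarrow> nat) \<Rightarrow> nat \<Rightarrow> real" where
  "phi n pp y = (if real y > fixpt n pp \<and> real (pp y) < fixpt n pp then 1 else 0)"

text \<open>L(x_0) = 0 at the leftmost point 1 and L(f y) = L y + rho - phi y, i.e.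
  L(pp^m 1) = m rho - sum_{i<m} phi(pp^i 1) for m < n.\<close>
definition code :: "nat \<Rightarrow> (nat \<Rightarrow> nat) \<Rightarrow> nat \<Rightarrow> real" where
  "code n pp y = (let m = (THE m. m < n \<and> (pp ^^ m) 1 = y) in
      real m * orho n pp - (\<Sum>i<m. phi n pp ((pp ^^ i) 1)))"

definition a_greater :: "real \<Rightarrow> real \<Rightarrow> real \<Rightarrow> bool" where
  "a_greater a x y \<longleftrightarrow> (x < y \<and> y < a) \<or> (x > y \<and> y > a)"

definition code_nondecreasing :: "nat \<Rightarrow> (nat \<Rightarrow> nat) \<Rightarrow> bool" where
  "code_nondecreasing n pp \<longleftrightarrow>
     (\<forall>x\<in>{1..n}. \<forall>y\<in>{1..n}. a_greater (fixpt n pp) (real x) (real y) \<longrightarrow>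
        code n pp x \<le> code n pp y)"

definition has_cycle_pattern :: "real \<Rightarrow> real \<Rightarrow> (real \<Rightarrow> real) \<Rightarrow> nat \<Rightarrow> (nat \<Rightarrow> nat) \<Rightarrow> bool" where
  "has_cycle_pattern a b f n pp \<longleftrightarrow>
     (\<exists>e :: nat \<Rightarrow> real. strict_mono_on {1..n} e \<and>
        (\<forall>i\<in>{1..n}. e i \<in> {a..b} \<and> f (e i) = e (pp i)))"

definition forces :: "nat \<Rightarrow> (nat \<Rightarrow> nat) \<Rightarrow> nat \<Rightarrow> (nat \<Rightarrow> nat) \<Rightarrow> bool" where
  "forces n A m B \<longleftrightarrow>
     (\<forall>(a::real) b f. a \<le> b \<longrightarrow> continuous_on {a..b} f \<longrightarrow> f ` {a..b} \<subseteq> {a..b} \<longrightarrow>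
        has_cycle_pattern a b f n A \<longrightarrow> has_cycle_pattern a b f m B)"

definition over_twist :: "nat \<Rightarrow> (nat \<Rightarrow> nat) \<Rightarrow> bool" where
  "over_twist n A \<longleftrightarrow> cyclic_pattern n A \<and> 2 \<le> n \<and>
     (\<forall>m B. cyclic_pattern m B \<and> 2 \<le> m \<and> orho m B = orho n A \<and> forces n A m B
            \<longrightarrow> m = n \<and> B = A)"

text \<open>Block structure with blocks T_n \<inter> I_j, j = 0..k, I_j = [lo j, hi j] pairwise disjoint;
  sg (a pattern on {1..k+1}) is obtained by collapsing blocks: r j is the position of
  block j from the left.\<close>
definition block_structure :: "nat \<Rightarrow> (nat \<Rightarrow> nat) \<Rightarrow> nat \<Rightarrow> (nat \<Rightarrow> nat) \<Rightarrow> bool" where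
  "block_structure n pp k sg \<longleftrightarrow> 1 \<le> k \<and>
     (\<exists>lo hi :: nat \<Rightarrow> real.
        let B = (\<lambda>j. {i \<in> {1..n}. lo j \<le> real i \<and> real i \<le> hi j}) in
        (\<forall>j\<le>k. lo j \<le> hi j \<and> B j \<noteq> {}) \<and>
        (\<forall>j\<le>k. \<forall>j'\<le>k. j \<noteq> j' \<longrightarrow> {lo j..hi j} \<inter> {lo j'..hi j'} = {}) \<and>
        (\<forall>j<k. pp ` B j = B (Suc j)) \<and> pp ` B k = B 0 \<and>
        cyclic_pattern (k + 1) sg \<and>
        (\<exists>r. bij_betw r {0..k} {1..k+1} \<and>
             (\<forall>j\<le>k. \<forall>j'\<le>k. r j < r j' \<longleftrightarrow> hi j < lo j') \<and>
             (\<forall>j\<le>k. sg (r j) = r (if j = k then 0 else Suc j))))"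

definition very_badly_ordered :: "nat \<Rightarrow> (nat \<Rightarrow> nat) \<Rightarrow> bool" where
  "very_badly_ordered n pp \<longleftrightarrow> orho n pp = r_pat n pp \<and>
     \<not> (\<exists>k sg. block_structure n pp k sg \<and> over_twist (k + 1) sg \<and>
                  orho (k + 1) sg = orho n pp)"

definition pi6 :: "nat \<Rightarrow> nat" where
  "pi6 i = (if i = 1 then 2 else if i = 2 then 4 else if i = 4 then 5 else
            if i = 5 then 3 else if i = 3 then 6 else if i = 6 then 1 else i)"

end

theory Submission
  imports Defs
begin

text \<open>On [1,6] the P-linear map of pi6 is f x = 2x, 9 - x, 13 - 2x on [1,3], [3,4], [4,6];
  its fixed point is 13/3. Every periodic orbit has over-rotation number at least 1/3: the step
  function U that takes the values 0, 2, 4, 3, 1 on [1,2), [2,4), [4,13/3), [13/3,5], (5,6]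
  satisfies U x + 2 \<le> U (f x) + 3 [x is a sign change], and summing this along an orbit of
  period q gives 3 (number of sign changes) \<ge> 2q. The cycle itself attains 1/3.

  A block structure over an over-twist of over-rotation number 1/3 has 3 or 6 blocks. Three
  blocks are incompatible with the order of the cycle, and six singleton blocks would make pi6
  itself an over-twist; but pi6 forces the 3-cycle: for a cycle e1 < ... < e6 of pattern pi6
  the chain of coverings [e1,e2] \<rightarrow> [e2,e3] \<rightarrow> [e5,e6] \<rightarrow> [e1,e2] yields a fixed
  point of the third iterate of f in [e1,e2].\<close>

section \<open>Covering of intervals by continuous images\<close>

lemma first_crossing:
  fixes f :: "real \<Rightarrow> real"
  assumes "u \<le> v" and cont: "continuous_on {u..v} f" and "f u \<le> d" "d \<le> f v"
  obtains w where "u \<le> w" "w \<le> v" "f w = d" "\<And>t. u \<le> t \<Longrightarrow> t < w \<Longrightarrow> f t < d"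
proof -
  define S where "S = {u..v} \<inter> f -` {d..}"
  have "closed S" unfolding S_def by (rule continuous_closed_preimage[OF cont]) auto
  moreover have "bounded S" unfolding S_def by (rule bounded_subset[of "{u..v}"]) auto
  ultimately have "compact S" by (simp add: compact_eq_bounded_closed)
  moreover have "v \<in> S" using assms by (simp add: S_def)
  ultimately obtain w where wS: "w \<in> S" and wmin: "\<forall>t\<in>S. w \<le> t"
    using compact_attains_inf by blast
  have below: "f t < d" if "u \<le> t" "t < w" for t
  proof -
    have "t \<notin> S" using that wmin by fastforce
    moreover have "t \<le> v" using that wS by (simp add: S_def)
    ultimately show ?thesis using that by (simp add: S_def)
  qed
  have "f w = d"
  proof (rule ccontr)
    assume "f w \<noteq> d"
    moreover have "u \<le> w" "w \<le> v" "d \<le> f w" using wS by (auto simp: S_def)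
    moreover have "continuous_on {u..w} f" using cont \<open>w \<le> v\<close> by (auto intro: continuous_on_subset)
    ultimately obtain t where "u \<le> t" "t \<le> w" "f t = d"
      using IVT'[of f u d w] assms(3) by blast
    then show False using below[of t] \<open>f w \<noteq> d\<close> by (cases "t = w") auto
  qed
  with wS below show thesis by (intro that) (auto simp: S_def)
qed

lemma last_crossing:
  fixes f :: "real \<Rightarrow> real"
  assumes "u \<le> v" and cont: "continuous_on {u..v} f" and "f u \<le> c" "c \<le> f v"
  obtains w where "u \<le> w" "w \<le> v" "f w = c" "\<And>t. w < t \<Longrightarrow> t \<le> v \<Longrightarrow> c < f t"
proof -
  define S where "S = {u..v} \<inter> f -` {..c}"
  have "closed S" unfolding S_def by (rule continuous_closed_preimage[OF cont]) auto
  moreover have "bounded S" unfolding S_def by (rule bounded_subset[of "{u..v}"]) auto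
  ultimately have "compact S" by (simp add: compact_eq_bounded_closed)
  moreover have "u \<in> S" using assms by (simp add: S_def)
  ultimately obtain w where wS: "w \<in> S" and wmax: "\<forall>t\<in>S. t \<le> w"
    using compact_attains_sup by blast
  have above: "c < f t" if "w < t" "t \<le> v" for t
  proof -
    have "t \<notin> S" using that wmax by fastforce
    moreover have "u \<le> t" using that wS by (simp add: S_def)
    ultimately show ?thesis using that by (simp add: S_def)
  qed
  have "f w = c"
  proof (rule ccontr)
    assume "f w \<noteq> c"
    moreover have "u \<le> w" "w \<le> v" "f w \<le> c" using wS by (auto simp: S_def)
    moreover have "continuous_on {w..v} f" using cont \<open>u \<le> w\<close> by (auto intro: continuous_on_subset)
    ultimately obtain t where "w \<le> t" "t \<le> v" "f t = c"
      using IVT'[of f w c v] assms(4) by blast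
    then show False using above[of t] \<open>f w \<noteq> c\<close> by (cases "t = w") auto
  qed
  with wS above show thesis by (intro that) (auto simp: S_def)
qed

lemma interval_covered_increasing:
  fixes f :: "real \<Rightarrow> real"
  assumes "u \<le> v" "continuous_on {u..v} f" "c \<le> d" "f u \<le> c" "d \<le> f v"
  obtains u' v' where "u \<le> u'" "u' \<le> v'" "v' \<le> v" "f ` {u'..v'} \<subseteq> {c..d}" "f u' = c" "f v' = d"
proof -
  have "f u \<le> d" using assms by linarith
  then obtain v' where v': "u \<le> v'" "v' \<le> v" "f v' = d" and below: "\<And>t. u \<le> t \<Longrightarrow> t < v' \<Longrightarrow> f t < d"
    using first_crossing[OF assms(1,2) _ assms(5)] by blast
  have "continuous_on {u..v'} f" using assms(2) v' by (auto intro: continuous_on_subset)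
  moreover have "c \<le> f v'" using v' assms by linarith
  ultimately obtain u' where u': "u \<le> u'" "u' \<le> v'" "f u' = c" and above: "\<And>t. u' < t \<Longrightarrow> t \<le> v' \<Longrightarrow> c < f t"
    using last_crossing[of u v' f c] assms(4) v'(1) by blast
  have "f ` {u'..v'} \<subseteq> {c..d}"
  proof (intro image_subsetI)
    fix t assume "t \<in> {u'..v'}"
    then have t: "u' \<le> t" "t \<le> v'" by auto
    have "c \<le> f t" using t u' above[of t] by (cases "t = u'") auto
    moreover have "f t \<le> d" using t u' v' below[of t] by (cases "t = v'") auto
    ultimately show "f t \<in> {c..d}" by simp
  qed
  then show thesis using u' v' by (intro that) auto
qed

lemma interval_covered_decreasing:
  fixes f :: "real \<Rightarrow> real"
  assumes "u \<le> v" "continuous_on {u..v} f" "c \<le> d" "f v \<le> c" "d \<le> f u"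
  obtains u' v' where "u \<le> u'" "u' \<le> v'" "v' \<le> v" "f ` {u'..v'} \<subseteq> {c..d}" "f u' = d" "f v' = c"
proof -
  have "continuous_on {u..v} (\<lambda>t. - f t)" using assms(2) by (intro continuous_intros)
  moreover have "- d \<le> - c" "- f u \<le> - d" "- c \<le> - f v" using assms by auto
  ultimately obtain u' v' where "u \<le> u'" "u' \<le> v'" "v' \<le> v" "(\<lambda>t. - f t) ` {u'..v'} \<subseteq> {-d..-c}"
    "- f u' = - d" "- f v' = - c"
    using interval_covered_increasing[OF assms(1)] by blast
  moreover from this(4) have "f ` {u'..v'} \<subseteq> {c..d}" by force
  ultimately show thesis by (intro that) simp_all
qed

section \<open>Periodic orbits\<close>

lemma periodic_orbit_eq_orbit:
  assumes "periodic_orbit f P"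
  obtains x q where "0 < q" "(f ^^ q) x = x" "P = range (\<lambda>k. (f ^^ k) x)"
proof -
  obtain x q where q: "0 < q" "(f ^^ q) x = x" and P: "P = {(f ^^ k) x | k. k < q}"
    using assms unfolding periodic_orbit_def by blast
  have "(f ^^ k) x \<in> P" for k
    using funpow_mod_eq[OF q(2), of k] q(1) unfolding P by (metis (mono_tags) mem_Collect_eq mod_less_divisor)
  then have "P = range (\<lambda>k. (f ^^ k) x)" unfolding P by blast
  with q show thesis by (rule that)
qed

lemma periodic_orbit_finite:
  assumes "periodic_orbit f P"
  shows "finite P"
proof -
  obtain x q where "P = {(f ^^ k) x | k. k < q}" using assms unfolding periodic_orbit_def by blast
  then have "P = (\<lambda>k. (f ^^ k) x) ` {..<q}" by blast
  then show ?thesis by simp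
qed

lemma periodic_orbit_image:
  assumes "periodic_orbit f P"
  shows "f ` P = P"
proof
  obtain x q where q: "0 < q" "(f ^^ q) x = x" and P: "P = range (\<lambda>k. (f ^^ k) x)"
    by (rule periodic_orbit_eq_orbit[OF assms])
  have step: "f ((f ^^ k) x) \<in> P" for k
    unfolding P using range_eqI[of _ "\<lambda>k. (f ^^ k) x" "Suc k"] by simp
  then show "f ` P \<subseteq> P" unfolding P by blast
  show "P \<subseteq> f ` P"
  proof
    fix y assume "y \<in> P"
    then obtain k where k: "y = (f ^^ k) x" unfolding P by blast
    have "(f ^^ (k + q)) x = y" unfolding k funpow_add o_apply q(2) ..
    moreover have "k + q = Suc (k + q - 1)" using q(1) by simp
    ultimately have "y = f ((f ^^ (k + q - 1)) x)" by (metis funpow.simps(2) o_apply)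
    then show "y \<in> f ` P" unfolding P by blast
  qed
qed

lemma periodic_orbit_fixed_point:
  assumes "periodic_orbit f P" "a \<in> P" "f a = a"
  shows "P = {a}"
proof -
  obtain x q where q: "0 < q" "(f ^^ q) x = x" and P: "P = range (\<lambda>k. (f ^^ k) x)"
    by (rule periodic_orbit_eq_orbit[OF assms(1)])
  obtain j where a: "a = (f ^^ j) x" using assms(2) unfolding P by blast
  have fixed: "(f ^^ n) a = a" for n by (induction n) (simp_all add: assms(3))
  have "j \<le> q * Suc j" using q(1) mult_le_mono1[of 1 q "Suc j"] by simp
  have "x = (f ^^ (q * Suc j)) x" using funpow_mod_eq[OF q(2), of "q * Suc j"] by simp
  also have "\<dots> = (f ^^ (q * Suc j - j + j)) x" using \<open>j \<le> q * Suc j\<close> by simp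
  also have "\<dots> = (f ^^ (q * Suc j - j)) a" unfolding a funpow_add o_apply ..
  also have "\<dots> = a" by (rule fixed)
  finally show ?thesis unfolding P using fixed by auto
qed

lemma potential_sum_bound:
  fixes U w :: "'a \<Rightarrow> real"
  assumes "finite P" "g ` P = P" and step: "\<And>y. y \<in> P \<Longrightarrow> U y + d \<le> U (g y) + w y"
  shows "d * card P \<le> sum w P"
proof -
  have "inj_on g P" using assms(1,2) by (simp add: eq_card_imp_inj_on)
  then have "(\<Sum>y\<in>P. U (g y)) = sum U P"
    using sum.reindex[of g P U] assms(2) by simp
  moreover have "(\<Sum>y\<in>P. U y + d) \<le> (\<Sum>y\<in>P. U (g y) + w y)"
    using step by (rule sum_mono)
  ultimately show ?thesis by (simp add: sum.distrib mult.commute)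
qed

lemma Inf_closure_eq_least:
  fixes S :: "real set"
  assumes "m \<in> S" "\<And>x. x \<in> S \<Longrightarrow> m \<le> x"
  shows "Inf (closure S) = m"
proof (rule cInf_eq_minimum)
  show "m \<in> closure S" using assms(1) closure_subset by blast
  have "closure S \<subseteq> {m..}"
    by (rule closure_minimal) (use assms(2) in auto)
  then show "m \<le> x" if "x \<in> closure S" for x using that by auto
qed

section \<open>Block structures\<close>

lemma cyclic_pattern_eqI:
  assumes "cyclic_pattern n A" "cyclic_pattern n B" "\<And>i. i \<in> {1..n} \<Longrightarrow> A i = B i"
  shows "A = B"
proof
  fix i show "A i = B i"
    using assms by (cases "i \<in> {1..n}") (auto simp: cyclic_pattern_def)
qed

definition block :: "nat \<Rightarrow> (nat \<Rightarrow> real) \<Rightarrow> (nat \<Rightarrow> real) \<Rightarrow> nat \<Rightarrow> nat set" where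
  "block n lo hi j = {i \<in> {1..n}. lo j \<le> real i \<and> real i \<le> hi j}"

lemma block_structureE:
  assumes "block_structure n pp k sg"
  obtains lo hi r where "1 \<le> k"
    "\<forall>j\<le>k. lo j \<le> hi j \<and> block n lo hi j \<noteq> {}"
    "\<forall>j\<le>k. \<forall>j'\<le>k. j \<noteq> j' \<longrightarrow> {lo j..hi j} \<inter> {lo j'..hi j'} = {}"
    "\<forall>j<k. pp ` block n lo hi j = block n lo hi (Suc j)" "pp ` block n lo hi k = block n lo hi 0"
    "cyclic_pattern (k + 1) sg" "bij_betw r {0..k} {1..k+1}"
    "\<forall>j\<le>k. \<forall>j'\<le>k. r j < r j' \<longleftrightarrow> hi j < lo j'"
    "\<forall>j\<le>k. sg (r j) = r (if j = k then 0 else Suc j)"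
  using assms unfolding block_structure_def Let_def block_def[symmetric]
  by (elim conjE exE) (rule that)

lemma block_convex:
  "a \<in> block n lo hi j \<Longrightarrow> b \<in> block n lo hi j \<Longrightarrow> a \<le> i \<Longrightarrow> i \<le> b \<Longrightarrow> i \<in> block n lo hi j"
  unfolding block_def by auto

lemma blocks_disjoint:
  assumes "{lo j..hi j} \<inter> {lo j'..hi j'} = {}"
  shows "block n lo hi j \<inter> block n lo hi j' = {}"
  using assms unfolding block_def by auto

lemma blocks_card_sum_le:
  assumes nonempty: "\<forall>j\<le>k. lo j \<le> hi j \<and> block n lo hi j \<noteq> {}"
    and disjoint: "\<forall>j\<le>k. \<forall>j'\<le>k. j \<noteq> j' \<longrightarrow> {lo j..hi j} \<inter> {lo j'..hi j'} = {}"
  shows "(\<Sum>j\<le>k. card (block n lo hi j)) \<le> n"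
    and "\<And>j. j \<le> k \<Longrightarrow> 1 \<le> card (block n lo hi j)"
    and "k + 1 \<le> n"
proof -
  have sub: "block n lo hi j \<subseteq> {1..n}" for j unfolding block_def by auto
  then have fin: "finite (block n lo hi j)" for j by (rule finite_subset) simp
  have "(\<Sum>j\<le>k. card (block n lo hi j)) = card (\<Union>j\<le>k. block n lo hi j)"
    using fin disjoint blocks_disjoint by (intro card_UN_disjoint[symmetric]) auto
  also have "\<dots> \<le> card {1..n}" using sub by (intro card_mono) auto
  finally show sum: "(\<Sum>j\<le>k. card (block n lo hi j)) \<le> n" by simp
  show one: "1 \<le> card (block n lo hi j)" if "j \<le> k" for j
    using nonempty that fin[of j] by (simp add: Suc_le_eq card_gt_0_iff One_nat_def)
  have "(\<Sum>j\<le>k. 1) \<le> (\<Sum>j\<le>k. card (block n lo hi j))"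
    using one by (intro sum_mono) auto
  with sum show "k + 1 \<le> n" by simp
qed

lemma bij_betw_rank:
  fixes g :: "nat \<Rightarrow> nat"
  assumes bij: "bij_betw g {0..k} {1..k+1}" and "j \<le> k"
  shows "g j = card {j' \<in> {0..k}. g j' < g j} + 1"
proof -
  have inj: "inj_on g {0..k}" and image: "g ` {0..k} = {1..k+1}"
    using bij by (auto simp: bij_betw_def)
  have gj: "g j \<in> {1..k+1}" using image \<open>j \<le> k\<close> by auto
  have "g ` {j' \<in> {0..k}. g j' < g j} = {y \<in> g ` {0..k}. y < g j}" by auto
  also have "\<dots> = {1..<g j}" using image gj by auto
  finally have "card {j' \<in> {0..k}. g j' < g j} = card {1..<g j}"
    using card_image inj_on_subset[OF inj] by (metis (no_types, lifting) mem_Collect_eq subsetI)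
  then show ?thesis using gj by simp
qed

lemma bij_betw_order_eq:
  fixes g h :: "nat \<Rightarrow> nat"
  assumes "bij_betw g {0..k} {1..k+1}" "bij_betw h {0..k} {1..k+1}"
    and "\<And>j j'. j \<le> k \<Longrightarrow> j' \<le> k \<Longrightarrow> g j < g j' \<longleftrightarrow> h j < h j'"
    and "j \<le> k"
  shows "g j = h j"
proof -
  have "{j' \<in> {0..k}. g j' < g j} = {j' \<in> {0..k}. h j' < h j}"
    using assms(3,4) by auto
  then show ?thesis using bij_betw_rank[OF assms(1,4)] bij_betw_rank[OF assms(2,4)] by simp
qed

lemma singleton_blocks:
  assumes n: "k + 1 = n"
    and nonempty: "\<forall>j\<le>k. lo j \<le> hi j \<and> block n lo hi j \<noteq> {}"
    and disjoint: "\<forall>j\<le>k. \<forall>j'\<le>k. j \<noteq> j' \<longrightarrow> {lo j..hi j} \<inter> {lo j'..hi j'} = {}"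
  shows "\<exists>b. bij_betw b {0..k} {1..n} \<and> (\<forall>j\<le>k. block n lo hi j = {b j})"
proof -
  note card = blocks_card_sum_le[OF nonempty disjoint]
  have one: "card (block n lo hi j) = 1" if "j \<le> k" for j
  proof -
    have "(\<Sum>i\<in>{..k} - {j}. (1::nat)) \<le> (\<Sum>i\<in>{..k} - {j}. card (block n lo hi i))"
      using card(2) by (intro sum_mono) auto
    moreover have "(\<Sum>i\<in>{..k} - {j}. (1::nat)) = k" using that by simp
    moreover have "(\<Sum>j\<le>k. card (block n lo hi j))
        = card (block n lo hi j) + (\<Sum>i\<in>{..k} - {j}. card (block n lo hi i))"
      using that by (simp add: sum.remove)
    ultimately have "card (block n lo hi j) \<le> 1" using card(1) n by linarith
    with card(2)[OF that] show ?thesis by linarith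
  qed
  define b where "b j = the_elem (block n lo hi j)" for j
  have b: "block n lo hi j = {b j}" if "j \<le> k" for j
    using one[OF that] unfolding b_def by (metis card_1_singletonE the_elem_eq)
  have "b ` {0..k} \<subseteq> {1..n}"
  proof (intro image_subsetI)
    fix j assume "j \<in> {0..k}"
    then have "b j \<in> block n lo hi j" using b by simp
    then show "b j \<in> {1..n}" by (simp add: block_def)
  qed
  moreover have inj: "inj_on b {0..k}"
  proof (rule inj_onI)
    fix j j' assume jj': "j \<in> {0..k}" "j' \<in> {0..k}" "b j = b j'"
    show "j = j'"
    proof (rule ccontr)
      assume "j \<noteq> j'"
      then have "block n lo hi j \<inter> block n lo hi j' = {}"
        using jj' disjoint blocks_disjoint by simp
      then show False using b jj' by simp
    qed
  qed
  moreover have "card (b ` {0..k}) = card {1..n}" using n card_image[OF inj] by simp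
  ultimately have "bij_betw b {0..k} {1..n}"
    unfolding bij_betw_def by (simp add: card_subset_eq)
  with b show ?thesis by blast
qed

lemma collapse_singleton_blocks:
  assumes bs: "block_structure n pp k sg" and n: "k + 1 = n" and "i \<in> {1..n}"
  shows "sg i = pp i"
proof -
  obtain lo hi r where "1 \<le> k"
    and nonempty: "\<forall>j\<le>k. lo j \<le> hi j \<and> block n lo hi j \<noteq> {}"
    and disjoint: "\<forall>j\<le>k. \<forall>j'\<le>k. j \<noteq> j' \<longrightarrow> {lo j..hi j} \<inter> {lo j'..hi j'} = {}"
    and step: "\<forall>j<k. pp ` block n lo hi j = block n lo hi (Suc j)"
    and last: "pp ` block n lo hi k = block n lo hi 0"
    and "cyclic_pattern (k + 1) sg" and r: "bij_betw r {0..k} {1..k+1}"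
    and r_order: "\<forall>j\<le>k. \<forall>j'\<le>k. r j < r j' \<longleftrightarrow> hi j < lo j'"
    and sg: "\<forall>j\<le>k. sg (r j) = r (if j = k then 0 else Suc j)"
    by (rule block_structureE[OF bs])
  obtain b where b_bij: "bij_betw b {0..k} {1..n}" and b: "\<And>j. j \<le> k \<Longrightarrow> block n lo hi j = {b j}"
    using singleton_blocks[OF n nonempty disjoint] by blast
  have lohi: "lo j \<le> real (b j) \<and> real (b j) \<le> hi j" if "j \<le> k" for j
  proof -
    have "b j \<in> block n lo hi j" using b[OF that] by simp
    then show ?thesis by (simp add: block_def)
  qed
  have order: "b j < b j' \<longleftrightarrow> r j < r j'" if jj': "j \<le> k" "j' \<le> k" for j j'
  proof
    assume "r j < r j'"
    then have "hi j < lo j'" using r_order jj' by simp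
    then have "real (b j) < real (b j')" using lohi[OF jj'(1)] lohi[OF jj'(2)] by linarith
    then show "b j < b j'" by simp
  next
    assume "b j < b j'"
    then have "real (b j) < real (b j')" and "j \<noteq> j'" by auto
    then have "hi j < lo j'"
      \<comment> \<open>otherwise max (lo j) (lo j') would lie in both intervals\<close>
      using disjoint jj' lohi[OF jj'(1)] lohi[OF jj'(2)]
      by (smt (verit) Int_iff atLeastAtMost_iff empty_iff max_def)
    then show "r j < r j'" using r_order jj' by simp
  qed
  have rb: "r j = b j" if "j \<le> k" for j
    using bij_betw_order_eq[OF _ r order that] b_bij n by simp
  have pp_b: "pp (b j) = b (if j = k then 0 else Suc j)" if "j \<le> k" for j
  proof (cases "j = k")
    case True then show ?thesis using last b[of k] b[of 0] by simp
  next
    case False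
    with that have "j < k" by simp
    then show ?thesis using step[rule_format, of j] b[of j] b[of "Suc j"] False by simp
  qed
  have "i \<in> b ` {0..k}" using b_bij \<open>i \<in> {1..n}\<close> by (simp add: bij_betw_def)
  then obtain j where "j \<le> k" "i = b j" by auto
  then show ?thesis using sg rb pp_b by simp
qed

lemma orho_eq_third_imp_dvd:
  assumes "orho m A = 1/3"
  shows "3 dvd m"
proof -
  have "m \<noteq> 0" using assms by (auto simp: orho_def)
  with assms have "3 * sign_changes m A = 2 * m"
    unfolding orho_def by (simp add: field_simps flip: of_nat_mult)
  then show ?thesis by presburger
qed

section \<open>The pattern pi6\<close>

declare One_nat_def [simp del]

lemma pi6_simps [simp]:
  "pi6 1 = 2" "pi6 2 = 4" "pi6 3 = 6" "pi6 4 = 5" "pi6 5 = 3" "pi6 6 = 1"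
  by (simp_all add: pi6_def)

lemma atLeastAtMost_1_6: "{1..6::nat} = {1,2,3,4,5,6}" by auto

lemma funpow_numeral: "(f ^^ numeral k) x = f ((f ^^ pred_numeral k) x)"
  by (simp add: numeral_eq_Suc)

lemma funpow_1: "((f :: 'a \<Rightarrow> 'a) ^^ 1) x = f x"
  by (simp add: One_nat_def)

lemma pi6_orbit_of_1:
  "(pi6 ^^ 0) 1 = 1" "(pi6 ^^ 1) 1 = 2" "(pi6 ^^ 2) 1 = 4" "(pi6 ^^ 3) 1 = 5"
  "(pi6 ^^ 4) 1 = 3" "(pi6 ^^ 5) 1 = 6"
  by (simp_all add: funpow_numeral funpow_1)

lemma cyclic_pattern_pi6: "cyclic_pattern 6 pi6"
proof -
  have bij: "bij_betw pi6 {1..6} {1..6}"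
    unfolding bij_betw_def atLeastAtMost_1_6 by (auto simp: inj_on_def)
  have outside: "\<forall>i. i \<notin> {1..6} \<longrightarrow> pi6 i = i" by (auto simp: pi6_def)
  have "(pi6 ^^ k) 1 \<in> {1..6}" for k
    by (induction k) (auto simp: pi6_def)
  moreover have "{1..6} = (\<lambda>k. (pi6 ^^ k) 1) ` {0,1,2,3,4,5}"
    unfolding atLeastAtMost_1_6 by (auto simp: pi6_orbit_of_1)
  ultimately have "{(pi6 ^^ k) 1 | k. True} = {1..6}" by blast
  with bij outside show ?thesis by (simp add: cyclic_pattern_def)
qed

lemma sign_changes_pi6: "sign_changes 6 pi6 = 4"
proof -
  have "{i \<in> {1..6}. (real (pi6 i) - real i) * (real (pi6 (pi6 i)) - real (pi6 i)) < 0} = {3,4,5,6}"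
    unfolding atLeastAtMost_1_6 by auto
  then show ?thesis by (simp add: sign_changes_def)
qed

lemma orho_pi6: "orho 6 pi6 = 1/3"
  by (simp add: orho_def sign_changes_pi6)

lemma over_rotation_pair_pi6: "over_rotation_pair 6 pi6 2 6"
  by (simp add: over_rotation_pair_def sign_changes_pi6)

definition pi6_map :: "real \<Rightarrow> real" where
  "pi6_map x = (if x \<le> 3 then 2 * x else if x \<le> 4 then 9 - x else 13 - 2 * x)"

lemma plin_pi6:
  assumes "1 \<le> x" "x \<le> 6"
  shows "plin 6 pi6 x = pi6_map x"
proof (cases "1 < x \<and> x < 6")
  case True
  define i where "i = nat \<lfloor>x\<rfloor>"
  have "1 \<le> \<lfloor>x\<rfloor>" "\<lfloor>x\<rfloor> \<le> 5" using True by (auto simp: le_floor_iff floor_le_iff)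
  then have i: "real i \<le> x" "x < real i + 1" "1 \<le> int i" "int i \<le> 5"
    unfolding i_def by (auto simp: of_nat_nat)
  then have "i \<in> {1,2,3,4,5}" by auto
  moreover have "plin 6 pi6 x = real (pi6 i) + (x - real i) * (real (pi6 (Suc i)) - real (pi6 i))"
    using True by (simp add: plin_def i_def Let_def)
  ultimately show ?thesis using i by (auto simp: pi6_map_def algebra_simps)
qed (use assms in \<open>auto simp: plin_def pi6_map_def\<close>)

lemma pi6_map_range: "1 \<le> x \<Longrightarrow> x \<le> 6 \<Longrightarrow> 1 \<le> pi6_map x \<and> pi6_map x \<le> 6"
  by (auto simp: pi6_map_def)

lemma fixpt_pi6: "fixpt 6 pi6 = 13/3"
  unfolding fixpt_def
proof (rule the_equality)
  show "1 \<le> (13/3::real) \<and> 13/3 \<le> real 6 \<and> plin 6 pi6 (13/3) = 13/3"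
    by (simp add: plin_pi6 pi6_map_def)
next
  fix a assume "1 \<le> a \<and> a \<le> real 6 \<and> plin 6 pi6 a = a"
  then show "a = 13/3" by (auto simp: plin_pi6 pi6_map_def split: if_splits)
qed

lemma code_pi6:
  "code 6 pi6 1 = 0" "code 6 pi6 2 = 1/3" "code 6 pi6 3 = 1/3"
  "code 6 pi6 4 = 2/3" "code 6 pi6 5 = 1" "code 6 pi6 6 = 2/3"
proof -
  have index: "(THE m. m < 6 \<and> (pi6 ^^ m) 1 = (pi6 ^^ m0) 1) = m0" if "m0 < 6" for m0
  proof (rule the_equality)
    fix m assume "m < 6 \<and> (pi6 ^^ m) 1 = (pi6 ^^ m0) 1"
    moreover have "m \<in> {0,1,2,3,4,5}" "m0 \<in> {0,1,2,3,4,5}" using that calculation by auto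
    ultimately show "m = m0" by (auto simp: pi6_orbit_of_1)
  qed (use that in simp)
  have phi: "phi 6 pi6 1 = 0" "phi 6 pi6 2 = 0" "phi 6 pi6 3 = 0" "phi 6 pi6 4 = 0" "phi 6 pi6 5 = 1"
    by (simp_all add: phi_def fixpt_pi6)
  show "code 6 pi6 1 = 0" "code 6 pi6 2 = 1/3" "code 6 pi6 3 = 1/3"
    "code 6 pi6 4 = 2/3" "code 6 pi6 5 = 1" "code 6 pi6 6 = 2/3"
    using index[of 0] index[of 1] index[of 2] index[of 3] index[of 4] index[of 5]
    unfolding code_def Let_def pi6_orbit_of_1
    by (simp_all add: orho_pi6 lessThan_nat_numeral pi6_orbit_of_1 phi)
qed

lemma code_nondecreasing_pi6: "code_nondecreasing 6 pi6"
  unfolding code_nondecreasing_def fixpt_pi6 atLeastAtMost_1_6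
  by (auto simp: a_greater_def code_pi6)

lemma not_turning_point_pi6:
  assumes "x \<noteq> 3"
  shows "\<not> turning_point 6 (plin 6 pi6) x"
proof
  assume tp: "turning_point 6 (plin 6 pi6) x"
  then have x: "1 < x" "x < 6" by (auto simp: turning_point_def)
  show False
  proof (cases "x < 3")
    case True
    define e where "e = min (x - 1) (3 - x)"
    have "\<forall>y\<in>{x-e<..<x+e}. \<forall>z\<in>{x-e<..<x+e}. y < z \<longrightarrow> plin 6 pi6 y < plin 6 pi6 z"
      using True x by (auto simp: e_def plin_pi6 pi6_map_def)
    moreover have "e > 0" using True x by (simp add: e_def)
    ultimately show False using tp unfolding turning_point_def by blast
  next
    case False
    define e where "e = min (x - 3) (6 - x)"
    have "\<forall>y\<in>{x-e<..<x+e}. \<forall>z\<in>{x-e<..<x+e}. y < z \<longrightarrow> plin 6 pi6 y > plin 6 pi6 z"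
      using False assms x by (auto simp: e_def plin_pi6 pi6_map_def)
    moreover have "e > 0" using False assms x by (simp add: e_def)
    ultimately show False using tp unfolding turning_point_def by blast
  qed
qed

lemma turning_point_pi6: "turning_point 6 (plin 6 pi6) 3"
  unfolding turning_point_def
proof (intro conjI notI)
  assume "\<exists>e>0. (\<forall>y\<in>{3-e<..<3+e}. \<forall>z\<in>{3-e<..<3+e}. y < z \<longrightarrow> plin 6 pi6 y < plin 6 pi6 z) \<or>
               (\<forall>y\<in>{3-e<..<3+e}. \<forall>z\<in>{3-e<..<3+e}. y < z \<longrightarrow> plin 6 pi6 y > plin 6 pi6 z)"
  then obtain e where "e > 0" and mono:
    "(\<forall>y\<in>{3-e<..<3+e}. \<forall>z\<in>{3-e<..<3+e}. y < z \<longrightarrow> plin 6 pi6 y < plin 6 pi6 z) \<or>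
     (\<forall>y\<in>{3-e<..<3+e}. \<forall>z\<in>{3-e<..<3+e}. y < z \<longrightarrow> plin 6 pi6 y > plin 6 pi6 z)" by blast
  define d where "d = min (e/2) (1/2)"
  have d: "0 < d" "d < e" "d \<le> 1/2" using \<open>e > 0\<close> by (auto simp: d_def)
  have "plin 6 pi6 3 = 6" "plin 6 pi6 (3 + d) = 6 - d" "plin 6 pi6 (3 - d) = 6 - 2 * d"
    using d by (auto simp: plin_pi6 pi6_map_def)
  moreover have "plin 6 pi6 3 < plin 6 pi6 (3 + d) \<or> plin 6 pi6 (3 - d) > plin 6 pi6 3"
    using mono d by auto
  ultimately show False using d by auto
qed simp_all

lemma unimodal_pi6: "unimodal 6 pi6"
proof -
  have "local_max (plin 6 pi6) 3"
    unfolding local_max_def by (rule exI[of _ 1]) (auto simp: plin_pi6 pi6_map_def)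
  then show ?thesis
    unfolding unimodal_def
    using cyclic_pattern_pi6 turning_point_pi6 not_turning_point_pi6 by metis
qed

definition pi6_potential :: "real \<Rightarrow> real" where
  "pi6_potential x = (if x < 2 then 0 else if x < 4 then 2 else if x < 13/3 then 4 else if x \<le> 5 then 3 else 1)"

lemma pi6_potential_step:
  assumes "1 \<le> x" "x \<le> 6" "x \<noteq> 13/3" "pi6_map x \<noteq> 13/3"
  shows "pi6_potential x + 2 \<le> pi6_potential (pi6_map x) + (if (pi6_map x - x) * (pi6_map (pi6_map x) - pi6_map x) < 0 then 3 else 0)"
  using assms pi6_map_range[of x] unfolding pi6_potential_def pi6_map_def
  by (auto simp: mult_less_0_iff split: if_splits)

lemma over_rotation_number_pi6_ge:
  assumes orbit: "periodic_orbit (plin 6 pi6) P" and "P \<subseteq> {1..6}" "2 \<le> card P"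
  shows "1/3 \<le> orho_orbit (plin 6 pi6) P"
proof -
  define Q where "Q x \<longleftrightarrow> (plin 6 pi6 x - x) * (plin 6 pi6 (plin 6 pi6 x) - plin 6 pi6 x) < 0" for x
  have image: "plin 6 pi6 ` P = P" by (rule periodic_orbit_image[OF orbit])
  have fixed: "13/3 \<notin> P"
  proof
    assume "13/3 \<in> P"
    moreover have "plin 6 pi6 (13/3) = 13/3" by (simp add: plin_pi6 pi6_map_def)
    ultimately have "P = {13/3}" by (rule periodic_orbit_fixed_point[OF orbit])
    with \<open>2 \<le> card P\<close> show False by simp
  qed
  have "pi6_potential y + 2 \<le> pi6_potential (plin 6 pi6 y) + (if Q y then 3 else 0)" if "y \<in> P" for y
  proof -
    have "y \<in> {1..6}" "plin 6 pi6 y \<in> P" using that image \<open>P \<subseteq> {1..6}\<close> by auto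
    then have "y \<noteq> 13/3" "pi6_map y \<noteq> 13/3" "plin 6 pi6 y = pi6_map y"
      using that fixed by (metis atLeastAtMost_iff of_nat_numeral plin_pi6)+
    moreover have "plin 6 pi6 (pi6_map y) = pi6_map (pi6_map y)"
      using pi6_map_range[of y] \<open>y \<in> {1..6}\<close> by (simp add: plin_pi6)
    ultimately show ?thesis
      using pi6_potential_step[of y] \<open>y \<in> {1..6}\<close> unfolding Q_def by simp
  qed
  then have "2 * real (card P) \<le> (\<Sum>y\<in>P. if Q y then 3 else 0)"
    by (rule potential_sum_bound[OF periodic_orbit_finite[OF orbit] image])
  also have "\<dots> = 3 * real (card {y \<in> P. Q y})"
    using periodic_orbit_finite[OF orbit] by (simp add: sum.If_cases Int_def)
  finally show ?thesis
    using \<open>2 \<le> card P\<close> by (simp add: orho_orbit_def Q_def field_simps)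
qed

lemma r_pat_pi6: "r_pat 6 pi6 = 1/3"
proof -
  let ?f = "plin 6 pi6" and ?P = "{1, 2, 3, 4, 5, 6 :: real}"
  have on_P: "?f 1 = 2" "?f 2 = 4" "?f 4 = 5" "?f 5 = 3" "?f 3 = 6" "?f 6 = 1"
    by (simp_all add: plin_pi6 pi6_map_def)
  have "{..<6::nat} = {0, 1, 2, 3, 4, 5}" by auto
  then have "{(?f ^^ k) 1 | k. k < 6} = (\<lambda>k. (?f ^^ k) 1) ` {0, 1, 2, 3, 4, 5}" by blast
  also have "\<dots> = ?P" by (auto simp: funpow_numeral funpow_1 on_P)
  finally have "?P = {(?f ^^ k) 1 | k. k < 6}" ..
  moreover have "(?f ^^ 6) 1 = 1" by (simp add: funpow_numeral funpow_1 on_P)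
  ultimately have "periodic_orbit ?f ?P"
    unfolding periodic_orbit_def by (intro exI[of _ 1] exI[of _ 6]) simp
  moreover have "{x \<in> ?P. (?f x - x) * (?f (?f x) - ?f x) < 0} = {3, 4, 5, 6}"
    by (auto simp: on_P)
  then have "orho_orbit ?f ?P = 1/3" by (simp add: orho_orbit_def)
  ultimately have witness: "periodic_orbit ?f ?P \<and> ?P \<subseteq> {1..real 6} \<and> 2 \<le> card ?P \<and> orho_orbit ?f ?P = 1/3"
    by simp
  show ?thesis
    unfolding r_pat_def over_rotation_interval_def
  proof (rule Inf_closure_eq_least)
    show "1/3 \<in> {orho_orbit ?f P | P. periodic_orbit ?f P \<and> P \<subseteq> {1..real 6} \<and> 2 \<le> card P}"
      using witness by force
  next
    fix t assume "t \<in> {orho_orbit ?f P | P. periodic_orbit ?f P \<and> P \<subseteq> {1..real 6} \<and> 2 \<le> card P}"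
    then obtain P where "t = orho_orbit ?f P" "periodic_orbit ?f P" "P \<subseteq> {1..6}" "2 \<le> card P"
      by auto
    then show "1/3 \<le> t" using over_rotation_number_pi6_ge by simp
  qed
qed

definition pi3 :: "nat \<Rightarrow> nat" where
  "pi3 i = (if i = 1 then 2 else if i = 2 then 3 else if i = 3 then 1 else i)"

lemma cyclic_pattern_pi3: "cyclic_pattern 3 pi3"
proof -
  have set3: "{1..3::nat} = {1,2,3}" by auto
  have bij: "bij_betw pi3 {1..3} {1..3}"
    unfolding bij_betw_def set3 by (auto simp: inj_on_def pi3_def)
  have outside: "\<forall>i. i \<notin> {1..3} \<longrightarrow> pi3 i = i" by (auto simp: pi3_def)
  have "(pi3 ^^ k) 1 \<in> {1..3}" for k
    by (induction k) (auto simp: pi3_def)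
  moreover have "{1..3} = (\<lambda>k. (pi3 ^^ k) 1) ` {0,1,2}"
    unfolding set3 by (auto simp: funpow_numeral funpow_1 pi3_def)
  ultimately have "{(pi3 ^^ k) 1 | k. True} = {1..3}" by blast
  with bij outside show ?thesis by (simp add: cyclic_pattern_def)
qed

lemma orho_pi3: "orho 3 pi3 = 1/3"
proof -
  have "{i \<in> {1..3}. (real (pi3 i) - real i) * (real (pi3 (pi3 i)) - real (pi3 i)) < 0} = {2,3::nat}"
    by (auto simp: pi3_def)
  then show ?thesis by (simp add: orho_def sign_changes_def)
qed

lemma pi6_forced_period_three_point:
  fixes f :: "real \<Rightarrow> real" and e :: "nat \<Rightarrow> real"
  assumes ord: "e 1 < e 2" "e 2 < e 3" "e 3 < e 4" "e 4 < e 5" "e 5 < e 6"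
    and fe: "f (e 1) = e 2" "f (e 2) = e 4" "f (e 3) = e 6" "f (e 5) = e 3" "f (e 6) = e 1"
    and cont: "continuous_on {e 1..e 6} f"
  obtains x where "e 1 \<le> x" "x < f x" "f x < f (f x)" "f (f x) \<le> e 6" "f (f (f x)) = x"
proof -
  have cont_on: "continuous_on {u..v} f" if "e 1 \<le> u" "v \<le> e 6" for u v
    using cont that by (auto intro: continuous_on_subset)
  obtain s t where st: "e 5 \<le> s" "s \<le> t" "t \<le> e 6" "f ` {s..t} \<subseteq> {e 1..e 2}"
      "f s = e 2" "f t = e 1"
    by (rule interval_covered_decreasing[of "e 5" "e 6" f "e 1" "e 2"]) (use ord fe cont_on in auto)
  obtain s' t' where st': "e 2 \<le> s'" "s' \<le> t'" "t' \<le> e 3" "f ` {s'..t'} \<subseteq> {s..t}"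
      "f s' = s" "f t' = t"
    by (rule interval_covered_increasing[of "e 2" "e 3" f s t]) (use ord fe cont_on st in auto)
  obtain p q where pq: "e 1 \<le> p" "p \<le> q" "q \<le> e 2" "f ` {p..q} \<subseteq> {s'..t'}"
      "f p = s'" "f q = t'"
    by (rule interval_covered_increasing[of "e 1" "e 2" f s' t']) (use ord fe cont_on st' in auto)
  have "continuous_on {s..t} f" "continuous_on {s'..t'} f" "continuous_on {p..q} f"
    using cont_on st st' pq ord by auto
  moreover have "(\<lambda>x. f (f x)) ` {p..q} \<subseteq> {s..t}" using pq(4) st'(4) by auto
  ultimately have "continuous_on {p..q} (\<lambda>x. f (f (f x)))"
    using pq(4) by (metis continuous_on_compose2)
  then have "continuous_on {p..q} (\<lambda>x. f (f (f x)) - x)"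
    by (intro continuous_intros)
  moreover have "f (f (f q)) - q \<le> 0" "0 \<le> f (f (f p)) - p"
    using pq st st' by auto
  ultimately have "\<exists>x. p \<le> x \<and> x \<le> q \<and> f (f (f x)) - x = 0"
    using IVT2'[of "\<lambda>x. f (f (f x)) - x" q 0 p] pq(2) by blast
  then obtain x where x: "p \<le> x" "x \<le> q" "f (f (f x)) = x" by auto
  have fx: "f x \<in> {s'..t'}" using pq(4) x by (auto simp: image_subset_iff)
  then have ffx: "f (f x) \<in> {s..t}" using st'(4) by (auto simp: image_subset_iff)
  have "x \<noteq> f x"
  proof
    assume "x = f x"
    then have "x = e 2" using fx x pq st' by auto
    then show False using fx fe st' ord \<open>x = f x\<close> by auto
  qed
  then have "x < f x" "f x < f (f x)" using fx ffx x pq st st' ord by auto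
  moreover have "e 1 \<le> x" "f (f x) \<le> e 6" using x pq ffx st by auto
  ultimately show thesis using that x(3) by blast
qed

lemma pi6_forces_pi3: "forces 6 pi6 3 pi3"
  unfolding forces_def
proof (intro allI impI)
  fix a b :: real and f :: "real \<Rightarrow> real"
  assume "a \<le> b" and cont: "continuous_on {a..b} f" and "f ` {a..b} \<subseteq> {a..b}"
    and "has_cycle_pattern a b f 6 pi6"
  then obtain e where mono: "strict_mono_on {1..6} e"
    and e: "\<And>i. i \<in> {1..6} \<Longrightarrow> e i \<in> {a..b} \<and> f (e i) = e (pi6 i)"
    unfolding has_cycle_pattern_def by blast
  have ord: "e 1 < e 2" "e 2 < e 3" "e 3 < e 4" "e 4 < e 5" "e 5 < e 6"
    by (rule strict_mono_onD[OF mono]; simp)+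
  have fe: "f (e 1) = e 2" "f (e 2) = e 4" "f (e 3) = e 6" "f (e 5) = e 3" "f (e 6) = e 1"
    using e by simp_all
  have "a \<le> e 1" "e 6 \<le> b" using e[of 1] e[of 6] by auto
  with cont have "continuous_on {e 1..e 6} f" by (auto intro: continuous_on_subset)
  then obtain x where x: "e 1 \<le> x" "x < f x" "f x < f (f x)" "f (f x) \<le> e 6" "f (f (f x)) = x"
    by (rule pi6_forced_period_three_point[OF ord fe])
  have "strict_mono_on {1..3} (\<lambda>i::nat. if i = 1 then x else if i = 2 then f x else f (f x))"
    using x by (intro strict_mono_onI) (auto simp: le_Suc_eq numeral_eq_Suc)
  moreover have "x \<in> {a..b}" "f x \<in> {a..b}" "f (f x) \<in> {a..b}"
    using x \<open>a \<le> e 1\<close> \<open>e 6 \<le> b\<close> by auto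
  ultimately show "has_cycle_pattern a b f 3 pi3"
    unfolding has_cycle_pattern_def using x(5)
    by (intro exI[of _ "\<lambda>i. if i = 1 then x else if i = 2 then f x else f (f x)"])
       (auto simp: pi3_def)
qed

lemma not_over_twist_pi6: "\<not> over_twist 6 pi6"
  unfolding over_twist_def
  using pi6_forces_pi3 cyclic_pattern_pi3 orho_pi3 orho_pi6 by fastforce

lemma pi6_no_three_cyclic_blocks:
  fixes S0 S1 S2 :: "nat set"
  assumes c: "c \<in> S0" "c \<in> {1..6}"
    and maps: "pi6 ` S0 \<subseteq> S1" "pi6 ` S1 \<subseteq> S2" "pi6 ` S2 \<subseteq> S0"
    and convex0: "\<And>a b i. a \<in> S0 \<Longrightarrow> b \<in> S0 \<Longrightarrow> a \<le> i \<Longrightarrow> i \<le> b \<Longrightarrow> i \<in> S0"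
    and convex1: "\<And>a b i. a \<in> S1 \<Longrightarrow> b \<in> S1 \<Longrightarrow> a \<le> i \<Longrightarrow> i \<le> b \<Longrightarrow> i \<in> S1"
    and "S0 \<inter> S1 = {}" "S1 \<inter> S2 = {}"
  shows False
proof -
  have m01: "pi6 x \<in> S1" if "x \<in> S0" for x using maps(1) that by blast
  have m12: "pi6 x \<in> S2" if "x \<in> S1" for x using maps(2) that by blast
  have m20: "pi6 x \<in> S0" if "x \<in> S2" for x using maps(3) that by blast
  \<comment> \<open>follow c around the three sets until a convex set is forced to contain a point of its neighbour\<close>
  consider "c = 1" | "c = 2" | "c = 3" | "c = 4" | "c = 5" | "c = 6" using c(2) by force
  then show False
  proof cases
    case 1
    then have "2 \<in> S1" "5 \<in> S0" using c(1) m01[of 1] m12[of 2] m20[of 4] by auto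
    with c(1) 1 have "2 \<in> S0" using convex0[of 1 5 2] by auto
    with \<open>2 \<in> S1\<close> \<open>S0 \<inter> S1 = {}\<close> show False by blast
  next
    case 2
    then have "4 \<in> S1" "5 \<in> S2" "3 \<in> S0" using c(1) m01[of 2] m12[of 4] m20[of 5] by auto
    then have "5 \<in> S1" using m01[of 3] convex1[of 4 6 5] by auto
    with \<open>5 \<in> S2\<close> \<open>S1 \<inter> S2 = {}\<close> show False by blast
  next
    case 3
    then have "6 \<in> S1" "2 \<in> S0" using c(1) m01[of 3] m12[of 6] m20[of 1] by auto
    then have "4 \<in> S1" "5 \<in> S2" using m01[of 2] m12[of 4] by auto
    then have "5 \<in> S1" using \<open>6 \<in> S1\<close> convex1[of 4 6 5] by auto
    with \<open>5 \<in> S2\<close> \<open>S1 \<inter> S2 = {}\<close> show False by blast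
  next
    case 4
    then have "5 \<in> S1" "6 \<in> S0" using c(1) m01[of 4] m12[of 5] m20[of 3] by auto
    with c(1) 4 have "5 \<in> S0" using convex0[of 4 6 5] by auto
    with \<open>5 \<in> S1\<close> \<open>S0 \<inter> S1 = {}\<close> show False by blast
  next
    case 5
    then have "3 \<in> S1" "1 \<in> S0" using c(1) m01[of 5] m12[of 3] m20[of 6] by auto
    with c(1) 5 have "3 \<in> S0" using convex0[of 1 5 3] by auto
    with \<open>3 \<in> S1\<close> \<open>S0 \<inter> S1 = {}\<close> show False by blast
  next
    case 6
    then have "4 \<in> S0" using c(1) m01[of 6] m12[of 1] m20[of 2] by auto
    then have "5 \<in> S0" "5 \<in> S1" using c(1) 6 m01[of 4] convex0[of 4 6 5] by auto
    with \<open>S0 \<inter> S1 = {}\<close> show False by blast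
  qed
qed

lemma pi6_no_block_structure_over_twist:
  assumes bs: "block_structure 6 pi6 k sg" and twist: "over_twist (k + 1) sg"
    and rho: "orho (k + 1) sg = 1/3"
  shows False
proof -
  obtain lo hi r where "1 \<le> k"
    and nonempty: "\<forall>j\<le>k. lo j \<le> hi j \<and> block 6 lo hi j \<noteq> {}"
    and disjoint: "\<forall>j\<le>k. \<forall>j'\<le>k. j \<noteq> j' \<longrightarrow> {lo j..hi j} \<inter> {lo j'..hi j'} = {}"
    and step: "\<forall>j<k. pi6 ` block 6 lo hi j = block 6 lo hi (Suc j)"
    and last: "pi6 ` block 6 lo hi k = block 6 lo hi 0"
    by (rule block_structureE[OF bs])
  have "k + 1 \<le> 6" by (rule blocks_card_sum_le(3)[OF nonempty disjoint])
  with \<open>1 \<le> k\<close> orho_eq_third_imp_dvd[OF rho] have "k = 2 \<or> k = 5" by presburger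
  then show False
  proof
    assume "k = 2"
    obtain c where "c \<in> block 6 lo hi 0" using nonempty by blast
    then show False
    proof (rule pi6_no_three_cyclic_blocks)
      show "c \<in> {1..6}" using \<open>c \<in> block 6 lo hi 0\<close> by (simp add: block_def)
      show "pi6 ` block 6 lo hi 0 \<subseteq> block 6 lo hi 1" "pi6 ` block 6 lo hi 1 \<subseteq> block 6 lo hi 2"
        "pi6 ` block 6 lo hi 2 \<subseteq> block 6 lo hi 0"
        using step last \<open>k = 2\<close> by (auto simp: numeral_2_eq_2 One_nat_def)
      show "block 6 lo hi 0 \<inter> block 6 lo hi 1 = {}"
        by (rule blocks_disjoint) (use disjoint[rule_format, of 0 1] \<open>k = 2\<close> in simp)
      show "block 6 lo hi 1 \<inter> block 6 lo hi 2 = {}"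
        by (rule blocks_disjoint) (use disjoint[rule_format, of 1 2] \<open>k = 2\<close> in simp)
    qed (auto intro: block_convex)
  next
    assume "k = 5"
    have "cyclic_pattern 6 sg" using twist \<open>k = 5\<close> by (simp add: over_twist_def)
    then have "sg = pi6"
      using cyclic_pattern_pi6 collapse_singleton_blocks[OF bs] \<open>k = 5\<close>
      by (intro cyclic_pattern_eqI) auto
    with twist \<open>k = 5\<close> not_over_twist_pi6 show False by simp
  qed
qed

theorem mainTheorem8:
  shows "cyclic_pattern 6 pi6 \<and> unimodal 6 pi6 \<and> over_rotation_pair 6 pi6 2 6 \<and>
         code_nondecreasing 6 pi6 \<and> r_pat 6 pi6 = 1/3 \<and> orho 6 pi6 = 1/3 \<and>
         \<not> (\<exists>k sg. block_structure 6 pi6 k sg \<and> over_twist (k + 1) sg \<and>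
                      orho (k + 1) sg = 1/3) \<and>
         very_badly_ordered 6 pi6"
proof -
  have no_block: "\<not> (\<exists>k sg. block_structure 6 pi6 k sg \<and> over_twist (k + 1) sg \<and>
                            orho (k + 1) sg = 1/3)"
    using pi6_no_block_structure_over_twist by blast
  then have "very_badly_ordered 6 pi6"
    unfolding very_badly_ordered_def by (simp add: orho_pi6 r_pat_pi6)
  with no_block show ?thesis
    using cyclic_pattern_pi6 unimodal_pi6 over_rotation_pair_pi6 code_nondecreasing_pi6
      r_pat_pi6 orho_pi6 by blast
qed

end
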